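(* In the setting of the context, for all triples $(T,L,v)\in\{1,\ldots,L\}\times\mathbb N_+\times[0.5,1)$ and any $u_{\mathrm{cut}}\in\{1,\ldots,p-1\}$, $$V^+_{T,L}(v,\rho_{\mathrm{thr}}(u_{\mathrm{cut}}+1))\ge V^+_{T,L}(v,\rho_{\mathrm{thr}}(u_{\mathrm{cut}})).$$
   Context: Data: $\boldsymbol X=[\boldsymbol x_1\cdots\boldsymbol x_p]\in\mathbb R^{n\times p}$ with standardized columns, $\boldsymbol y\in\mathbb R^n$; an unknown active set $\mathcal A\subseteq\{1,\ldots,p\}$, the remaining variables being null. T-Rex framework: fix $K,L\ge1$, $T\in\{1,\ldots,L\}$; for $k=1,\ldots,K$ append a dummy matrix $\mathring{\boldsymbol X}_k\in\mathbb R^{n\times L}$ (i.i.d. entries from a univariate distribution with finite mean and variance), run a forward selection method (at most one variable per iteration) on $(\boldsymbol y,[\boldsymbol X\ \mathring{\boldsymbol X}_k])$ and terminate once $T$ dummies are included; $\mathcal C_{k,L}(T)$ = original variables included before termination; $\Phi_{T,L}(j)=\frac1K\sum_k\mathbb 1\{j\in\mathcal C_{k,L}(T)\}$. Dendrogram groups: with $\rho_{j,j'}=\boldsymbol x_j^\top\boldsymbol x_{j'}$, agglomerative hierarchical clustering with distance $1-|\rho|$ (single, complete, or average linkage) gives merge heights $c_1\ge\cdots\ge c_{p-1}$; set $c_0=1$, $c_p=0$, $\rho_{\mathrm{thr}}(u)=1-c_u$ for $u=1,\ldots,p$; $\mathrm{Gr}(j,\rho_{\mathrm{thr}}(u_{\mathrm{cut}}))$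 is the set of $j'\neq j$ in the same cluster as $j$ when the dendrogram is cut at distance $1-\rho_{\mathrm{thr}}(u_{\mathrm{cut}})$. Define $\Psi^+_{T,L}(j,\rho)=\big(2-\min_{j'\in\mathrm{Gr}(j,\rho)}|\Phi_{T,L}(j)-\Phi_{T,L}(j')|\big)^{-1}$ if $\mathrm{Gr}(j,\rho)\ne\varnothing$ and $\Psi^+_{T,L}(j,\rho)=1$ otherwise, and $$V^+_{T,L}(v,\rho)=\big|\{\text{null } j:\Psi^+_{T,L}(j,\rho)\cdot\Phi_{T,L}(j)>v\}\big|.$$ *)

theory Defs
  imports Complex_Main
begin

text \<open>The design matrix X is an n x p real matrix given as a function
  X i j (row i in {1..n}, column j in {1..p}).\<close>

definition standardized_cols :: "nat \<Rightarrow> nat \<Rightarrow> (nat \<Rightarrow> nat \<Rightarrow> real) \<Rightarrow> bool" where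
  "standardized_cols n p X \<longleftrightarrow>
     (\<forall>j\<in>{1..p}. (\<Sum>i\<in>{1..n}. X i j) = 0 \<and> (\<Sum>i\<in>{1..n}. (X i j)^2) = 1)"

definition corr :: "nat \<Rightarrow> (nat \<Rightarrow> nat \<Rightarrow> real) \<Rightarrow> nat \<Rightarrow> nat \<Rightarrow> real" where
  "corr n X j j' = (\<Sum>i\<in>{1..n}. X i j * X i j')"

definition dissim :: "nat \<Rightarrow> (nat \<Rightarrow> nat \<Rightarrow> real) \<Rightarrow> nat \<Rightarrow> nat \<Rightarrow> real" where
  "dissim n X j j' = 1 - \<bar>corr n X j j'\<bar>"

datatype linkage = Single | Complete | Average

definition link :: "linkage \<Rightarrow> nat \<Rightarrow> (nat \<Rightarrow> nat \<Rightarrow> real) \<Rightarrow> nat set \<Rightarrow> nat set \<Rightarrow> real" where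
  "link lk n X A B = (case lk of
      Single \<Rightarrow> Min ((\<lambda>(a,b). dissim n X a b) ` (A \<times> B))
    | Complete \<Rightarrow> Max ((\<lambda>(a,b). dissim n X a b) ` (A \<times> B))
    | Average \<Rightarrow> (\<Sum>a\<in>A. \<Sum>b\<in>B. dissim n X a b) / (real (card A) * real (card B)))"

text \<open>P i is the partition of {1..p} after i merges (P 0 = singletons); h i (1 \<le> i \<le> p-1)
  is the linkage distance at which the i-th merge takes place.\<close>

definition agglomerative ::
  "linkage \<Rightarrow> nat \<Rightarrow> (nat \<Rightarrow> nat \<Rightarrow> real) \<Rightarrow> nat \<Rightarrow> (nat \<Rightarrow> nat set set) \<Rightarrow> (nat \<Rightarrow> real) \<Rightarrow> bool" where
  "agglomerative lk n X p P h \<longleftrightarrow>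
     P 0 = (\<lambda>j. {j}) ` {1..p} \<and>
     (\<forall>i < p - 1. \<exists>A B. A \<in> P i \<and> B \<in> P i \<and> A \<noteq> B \<and>
        (\<forall>A' B'. A' \<in> P i \<and> B' \<in> P i \<and> A' \<noteq> B' \<longrightarrow> link lk n X A B \<le> link lk n X A' B') \<and>
        P (Suc i) = insert (A \<union> B) (P i - {A, B}) \<and>
        h (Suc i) = link lk n X A B)"

text \<open>Merge heights sorted decreasingly: c_1 \<ge> ... \<ge> c_{p-1}; c_0 = 1, c_p = 0.\<close>

definition merge_height :: "(nat \<Rightarrow> real) \<Rightarrow> nat \<Rightarrow> nat \<Rightarrow> real" where
  "merge_height h p u =
     (if u = 0 then 1 else if p \<le> u then 0
      else rev (sort (map h [1..<p])) ! (u - 1))"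

definition rho_thr :: "(nat \<Rightarrow> real) \<Rightarrow> nat \<Rightarrow> nat \<Rightarrow> real" where
  "rho_thr h p u = 1 - merge_height h p u"

text \<open>Cutting the dendrogram at distance d: perform all merges of height \<le> d.\<close>

definition cut_partition :: "(nat \<Rightarrow> nat set set) \<Rightarrow> (nat \<Rightarrow> real) \<Rightarrow> nat \<Rightarrow> real \<Rightarrow> nat set set" where
  "cut_partition P h p d = P (card {i \<in> {1..p-1}. h i \<le> d})"

definition Gr :: "(nat \<Rightarrow> nat set set) \<Rightarrow> (nat \<Rightarrow> real) \<Rightarrow> nat \<Rightarrow> nat \<Rightarrow> real \<Rightarrow> nat set" where
  "Gr P h p j \<rho> = {j'. j' \<noteq> j \<and> (\<exists>S \<in> cut_partition P h p (1 - \<rho>). j \<in> S \<and> j' \<in> S)}"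

text \<open>C k T L = candidate set C_{k,L}(T) (original variables in {1..p} selected in the
  k-th random experiment before the T-th dummy enters).\<close>

definition Phi :: "nat \<Rightarrow> (nat \<Rightarrow> nat \<Rightarrow> nat \<Rightarrow> nat set) \<Rightarrow> nat \<Rightarrow> nat \<Rightarrow> nat \<Rightarrow> real" where
  "Phi K C T L j = (1 / real K) * (\<Sum>k\<in>{1..K}. if j \<in> C k T L then 1 else 0)"

definition Psi_plus ::
  "nat \<Rightarrow> (nat \<Rightarrow> nat \<Rightarrow> nat \<Rightarrow> nat set) \<Rightarrow> (nat \<Rightarrow> nat set set) \<Rightarrow> (nat \<Rightarrow> real) \<Rightarrow> nat
    \<Rightarrow> nat \<Rightarrow> nat \<Rightarrow> nat \<Rightarrow> real \<Rightarrow> real" where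
  "Psi_plus K C P h p T L j \<rho> =
     (if Gr P h p j \<rho> = {} then 1
      else 1 / (2 - Min ((\<lambda>j'. \<bar>Phi K C T L j - Phi K C T L j'\<bar>) ` Gr P h p j \<rho>)))"

definition V_plus ::
  "nat \<Rightarrow> (nat \<Rightarrow> nat \<Rightarrow> nat \<Rightarrow> nat set) \<Rightarrow> (nat \<Rightarrow> nat set set) \<Rightarrow> (nat \<Rightarrow> real) \<Rightarrow> nat
    \<Rightarrow> nat set \<Rightarrow> nat \<Rightarrow> nat \<Rightarrow> real \<Rightarrow> real \<Rightarrow> nat" where
  "V_plus K C P h p Act T L v \<rho> =
     card {j \<in> {1..p} - Act. Psi_plus K C P h p T L j \<rho> * Phi K C T L j > v}"

end

theory Submission
  imports Defs
begin

text \<open>Since the columns are standardized, correlations lie in [-1, 1], so all dissimilarities,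
  linkage distances and merge heights are nonnegative; together with the decreasing order this
  gives \<open>\<rho>_thr(u) \<le> \<rho>_thr(u+1)\<close> also for \<open>u + 1 = p\<close>.  A larger threshold cuts the dendrogram
  at a smaller distance, i.e. after fewer merges, and since clusters only grow along the
  agglomeration, every group \<open>Gr(j, \<rho>)\<close> shrinks.  A minimum over a smaller set is larger, so
  \<open>\<Psi>\<^sup>+\<close> increases, and as \<open>\<Phi> \<ge> 0\<close> every null variable counted at \<open>\<rho>_thr(u)\<close> is still counted at
  \<open>\<rho>_thr(u+1)\<close>.\<close>

lemma abs_corr_le_one:
  assumes "standardized_cols n p X" "j \<in> {1..p}" "j' \<in> {1..p}"
  shows "\<bar>corr n X j j'\<bar> \<le> 1"
proof -
  have norms: "(\<Sum>i\<in>{1..n}. (X i j)^2) = 1" "(\<Sum>i\<in>{1..n}. (X i j')^2) = 1"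
    using assms unfolding standardized_cols_def by auto
  have "\<bar>corr n X j j'\<bar> \<le> (\<Sum>i\<in>{1..n}. \<bar>X i j * X i j'\<bar>)"
    unfolding corr_def by (rule sum_abs)
  also have "\<dots> \<le> (\<Sum>i\<in>{1..n}. ((X i j)^2 + (X i j')^2) / 2)"
  proof (rule sum_mono)
    fix i
    have "0 \<le> (\<bar>X i j\<bar> - \<bar>X i j'\<bar>)^2" by simp
    then show "\<bar>X i j * X i j'\<bar> \<le> ((X i j)^2 + (X i j')^2) / 2"
      by (simp add: power2_eq_square abs_mult algebra_simps)
  qed
  also have "\<dots> = 1"
    using norms by (simp add: sum_divide_distrib[symmetric] sum.distrib)
  finally show ?thesis .
qed

lemma dissim_nonneg:
  assumes "standardized_cols n p X" "j \<in> {1..p}" "j' \<in> {1..p}"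
  shows "0 \<le> dissim n X j j'"
  using abs_corr_le_one[OF assms] unfolding dissim_def by simp

lemma link_nonneg:
  assumes "finite A" "finite B" "A \<noteq> {}" "B \<noteq> {}"
    and "\<And>a b. a \<in> A \<Longrightarrow> b \<in> B \<Longrightarrow> 0 \<le> dissim n X a b"
  shows "0 \<le> link lk n X A B"
proof -
  let ?D = "(\<lambda>(a, b). dissim n X a b) ` (A \<times> B)"
  have D: "finite ?D" "?D \<noteq> {}" "\<forall>d\<in>?D. 0 \<le> d" using assms by auto
  show ?thesis
  proof (cases lk)
    case Single
    then have "link lk n X A B = Min ?D" by (simp add: link_def)
    then show ?thesis using Min_in[OF D(1,2)] D(3) by metis
  next
    case Complete
    then have "link lk n X A B = Max ?D" by (simp add: link_def)
    then show ?thesis using Max_in[OF D(1,2)] D(3) by metis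
  next
    case Average
    have "0 \<le> (\<Sum>a\<in>A. \<Sum>b\<in>B. dissim n X a b)" using assms(5) by (intro sum_nonneg) auto
    then show ?thesis using Average by (simp add: link_def)
  qed
qed

lemma agglomerative_merge_step:
  assumes "agglomerative lk n X p P h" "i < p - 1"
  obtains A B where "A \<in> P i" "B \<in> P i"
    "P (Suc i) = insert (A \<union> B) (P i - {A, B})" "h (Suc i) = link lk n X A B"
  using assms(1)[unfolded agglomerative_def, THEN conjunct2, rule_format, OF assms(2)]
  by (elim exE conjE) (rule that)

lemma agglomerative_clusters:
  assumes "agglomerative lk n X p P h" "i \<le> p - 1" "S \<in> P i"
  shows "S \<noteq> {} \<and> S \<subseteq> {1..p}"
  using assms(2,3)
proof (induction i arbitrary: S)
  case 0
  then show ?case using assms(1) unfolding agglomerative_def by auto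
next
  case (Suc i)
  obtain A B where "A \<in> P i" "B \<in> P i" and P_Suc: "P (Suc i) = insert (A \<union> B) (P i - {A, B})"
    using agglomerative_merge_step[OF assms(1)] Suc.prems(1) by (metis Suc_le_lessD)
  then show ?case using Suc by (auto simp: P_Suc)
qed

lemma agglomerative_same_cluster_mono:
  assumes "agglomerative lk n X p P h" "i \<le> i'" "i' \<le> p - 1"
    and "S \<in> P i" "j \<in> S" "j' \<in> S"
  shows "\<exists>S'\<in>P i'. j \<in> S' \<and> j' \<in> S'"
  using assms(2,3)
proof (induction i' rule: dec_induct)
  case base
  then show ?case using assms(4-6) by blast
next
  case (step m)
  obtain A B where P_Suc: "P (Suc m) = insert (A \<union> B) (P m - {A, B})"
    using agglomerative_merge_step[OF assms(1)] step.hyps(2) step.prems by (metis Suc_le_lessD)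
  obtain S' where "S' \<in> P m" "j \<in> S'" "j' \<in> S'" using step by auto
  then show ?case unfolding P_Suc by (cases "S' = A \<or> S' = B") auto
qed

lemma merge_heights_nonneg:
  assumes "agglomerative lk n X p P h" "standardized_cols n p X" "i \<in> {1..p-1}"
  shows "0 \<le> h i"
proof -
  obtain m where m: "i = Suc m" "m < p - 1" using assms(3) by (cases i) auto
  obtain A B where AB: "A \<in> P m" "B \<in> P m" "h (Suc m) = link lk n X A B"
    using agglomerative_merge_step[OF assms(1) m(2)] by metis
  have "A \<noteq> {}" "A \<subseteq> {1..p}" "B \<noteq> {}" "B \<subseteq> {1..p}"
    using agglomerative_clusters[OF assms(1) less_imp_le[OF m(2)]] AB(1,2) by auto
  then have "0 \<le> link lk n X A B"
    by (intro link_nonneg dissim_nonneg[OF assms(2)]) (auto intro: finite_subset)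
  then show ?thesis using AB(3) m(1) by simp
qed

lemma merge_height_Suc_le:
  assumes "\<And>i. i \<in> {1..p-1} \<Longrightarrow> 0 \<le> h i" "1 \<le> u"
  shows "merge_height h p (Suc u) \<le> merge_height h p u"
proof -
  let ?hs = "rev (sort (map h [1..<p]))"
  consider "p \<le> u" | "Suc u = p" | "Suc u < p" by linarith
  then show ?thesis
  proof cases
    case 1
    then show ?thesis using assms(2) by (simp add: merge_height_def)
  next
    case 2
    then have "?hs ! (u - 1) \<in> h ` {1..p-1}"
      using assms(2) nth_mem[of "u - 1" ?hs] by auto
    then show ?thesis using 2 assms by (auto simp: merge_height_def)
  next
    case 3
    have "sort (map h [1..<p]) ! (p - 1 - Suc u) \<le> sort (map h [1..<p]) ! (p - 1 - Suc (u - 1))"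
      using 3 assms(2) by (intro sorted_nth_mono) auto
    then show ?thesis using 3 assms(2) by (simp add: merge_height_def rev_nth)
  qed
qed

lemma cut_index_le: "card {i \<in> {1..p-1}. h i \<le> d} \<le> p - 1"
proof -
  have "card {i \<in> {1..p-1}. h i \<le> d} \<le> card {1..p-1}" by (rule card_mono) auto
  then show ?thesis by simp
qed

lemma Gr_subset:
  assumes "agglomerative lk n X p P h"
  shows "Gr P h p j \<rho> \<subseteq> {1..p}"
  using agglomerative_clusters[OF assms cut_index_le]
  unfolding Gr_def cut_partition_def by blast

lemma cut_partition_coarsens:
  assumes "agglomerative lk n X p P h" "d \<le> d'"
    and "S \<in> cut_partition P h p d" "j \<in> S" "j' \<in> S"
  shows "\<exists>S'\<in>cut_partition P h p d'. j \<in> S' \<and> j' \<in> S'"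
proof -
  have "card {i \<in> {1..p-1}. h i \<le> d} \<le> card {i \<in> {1..p-1}. h i \<le> d'}"
    using assms(2) by (intro card_mono) auto
  from agglomerative_same_cluster_mono[OF assms(1) this cut_index_le assms(3-5)[unfolded cut_partition_def]]
  show ?thesis unfolding cut_partition_def .
qed

lemma Gr_antimono:
  assumes "agglomerative lk n X p P h" "\<rho> \<le> \<rho>'"
  shows "Gr P h p j \<rho>' \<subseteq> Gr P h p j \<rho>"
proof
  fix j' assume "j' \<in> Gr P h p j \<rho>'"
  then obtain S where "j' \<noteq> j" "S \<in> cut_partition P h p (1 - \<rho>')" "j \<in> S" "j' \<in> S"
    unfolding Gr_def by blast
  moreover have "1 - \<rho>' \<le> 1 - \<rho>" using assms(2) by simp
  ultimately obtain S' where "S' \<in> cut_partition P h p (1 - \<rho>)" "j \<in> S'" "j' \<in> S'"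
    using cut_partition_coarsens[OF assms(1)] by blast
  with \<open>j' \<noteq> j\<close> show "j' \<in> Gr P h p j \<rho>" unfolding Gr_def by blast
qed

lemma Phi_nonneg: "0 \<le> Phi K C T L j"
  unfolding Phi_def by (intro mult_nonneg_nonneg sum_nonneg) auto

lemma Phi_le_one:
  assumes "K \<ge> 1"
  shows "Phi K C T L j \<le> 1"
proof -
  have "(\<Sum>k\<in>{1..K}. if j \<in> C k T L then 1 else 0) \<le> (\<Sum>k\<in>{1..K}. (1::real))"
    by (rule sum_mono) auto
  then show ?thesis using assms unfolding Phi_def by (simp add: field_simps)
qed

lemma inverse_two_minus_Min_antimono:
  fixes f :: "'a \<Rightarrow> real"
  assumes "finite G" "G' \<subseteq> G" "\<And>x. x \<in> G \<Longrightarrow> 0 \<le> f x \<and> f x \<le> 1"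
  shows "(if G = {} then 1 else 1 / (2 - Min (f ` G)))
    \<le> (if G' = {} then 1 else 1 / (2 - Min (f ` G')))"
proof -
  have Min_bounds: "0 \<le> Min (f ` H) \<and> Min (f ` H) \<le> 1" if "H \<subseteq> G" "H \<noteq> {}" for H
  proof -
    have "Min (f ` H) \<in> f ` H" using that assms(1) finite_subset by (intro Min_in) auto
    then show ?thesis using that assms(3) by auto
  qed
  show ?thesis
  proof (cases "G' = {}")
    case True
    have "1 / (2 - Min (f ` G)) \<le> 1" if "G \<noteq> {}"
      using Min_bounds[OF order_refl that] by (simp add: divide_le_eq_1)
    then show ?thesis using True by simp
  next
    case False
    have "Min (f ` G) \<le> Min (f ` G')"
      using assms(1,2) False by (intro Min_antimono) auto
    then have "1 / (2 - Min (f ` G)) \<le> 1 / (2 - Min (f ` G'))"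
      using Min_bounds[OF assms(2) False] by (intro divide_left_mono) auto
    then show ?thesis using False assms(2) by auto
  qed
qed

lemma Psi_plus_antimono_Gr:
  assumes "K \<ge> 1" "finite (Gr P h p j \<rho>)" "Gr P h p j \<rho>' \<subseteq> Gr P h p j \<rho>"
  shows "Psi_plus K C P h p T L j \<rho> \<le> Psi_plus K C P h p T L j \<rho>'"
proof -
  have "0 \<le> \<bar>Phi K C T L j - Phi K C T L j'\<bar> \<and> \<bar>Phi K C T L j - Phi K C T L j'\<bar> \<le> 1" for j'
    using Phi_nonneg Phi_le_one[OF assms(1)] by (smt (verit))
  with assms(2,3) show ?thesis
    unfolding Psi_plus_def by (intro inverse_two_minus_Min_antimono)
qed

theorem lemma2:
  fixes n p K :: nat and X :: "nat \<Rightarrow> nat \<Rightarrow> real" and lk :: linkage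
    and P :: "nat \<Rightarrow> nat set set" and h :: "nat \<Rightarrow> real"
    and C :: "nat \<Rightarrow> nat \<Rightarrow> nat \<Rightarrow> nat set" and Act :: "nat set"
    and T L u_cut :: nat and v :: real
  assumes "standardized_cols n p X"
    and "agglomerative lk n X p P h"
    and "Act \<subseteq> {1..p}"
    and "K \<ge> 1"
    and "\<forall>k\<in>{1..K}. \<forall>T'. \<forall>L'. C k T' L' \<subseteq> {1..p}"
    and "L \<ge> 1" and "T \<in> {1..L}"
    and "0.5 \<le> v" and "v < 1"
    and "u_cut \<in> {1..p-1}"
  shows "V_plus K C P h p Act T L v (rho_thr h p (u_cut + 1))
           \<ge> V_plus K C P h p Act T L v (rho_thr h p u_cut)"
proof -
  let ?\<rho> = "rho_thr h p u_cut" and ?\<rho>' = "rho_thr h p (u_cut + 1)"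
  have "?\<rho> \<le> ?\<rho>'"
    using merge_height_Suc_le[OF merge_heights_nonneg[OF assms(2,1)]] assms(10)
    unfolding rho_thr_def by simp
  then have "Psi_plus K C P h p T L j ?\<rho> \<le> Psi_plus K C P h p T L j ?\<rho>'" for j
    using Psi_plus_antimono_Gr[OF assms(4)] Gr_antimono[OF assms(2)]
      finite_subset[OF Gr_subset[OF assms(2)]] by blast
  then have "Psi_plus K C P h p T L j ?\<rho> * Phi K C T L j
      \<le> Psi_plus K C P h p T L j ?\<rho>' * Phi K C T L j" for j
    using Phi_nonneg by (rule mult_right_mono)
  then have "{j \<in> {1..p} - Act. Psi_plus K C P h p T L j ?\<rho> * Phi K C T L j > v}
      \<subseteq> {j \<in> {1..p} - Act. Psi_plus K C P h p T L j ?\<rho>' * Phi K C T L j > v}"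
    by (auto intro: less_le_trans)
  then show ?thesis unfolding V_plus_def by (intro card_mono) auto
qed

end
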